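(* Let $S$ be a germ at $0\in\mathbb{C}^2$ which is a union of finitely many pairwise distinct germs of smooth curves, with desingularization of length $N\ge1$, and let $l$ be a germ of smooth curve at $0$ whose tangent line is distinct from the tangent lines of all branches of $S$ (so that $S\cup l$ has the same sequence of blow-ups $E_1,\dots,E_N$, the same $D_k$, parents, neighbours and proximity matrix $P$, with $\nu(S_1\cup l)=\nu(S_1)+1$, $n_1^{S\cup l}=n_1^S+1$, and $S_k$, $n_k$ unchanged for $k\ge2$). Then: (i) if $\Delta\in\{0,1\}^N$ with $\Delta_1=0$ is such that $\{\mathcal{E}(\Delta),\Delta\}$ is an admissible solution of $(\mathcal{H})$ for $S$, then the same $\Delta$ gives an admissible solution of $(\mathcal{H})$ for $S\cup l$; (ii) if $\nu(S)$ is odd and $\Delta\in\{0,1\}^N$ with $\Delta_1=1$ is such that $\{\mathcal{E}(\Delta),\Delta\}$ is an admissible solution of $(\mathcal{H})$ for $S$, then the same $\Delta$ gives an admissible solution of $(\mathcal{H})$ for $S\cup l$.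
   Context: Setup. Let $S$ be a germ at $0\in\mathbb{C}^2$ of reduced analytic curve. Its desingularization $E=E_1\circ\cdots\circ E_N$ is the sequence of point blow-ups defined as follows: $E_1$ is the blow-up of the origin $c_1=0$; then one successively blows up the points $c$ of the current exceptional divisor at which the germ of the strict transform of $S$ is non-empty and is not a single smooth branch transverse to the exceptional divisor at a regular (non-corner) point of it; the process stops when no such point remains. The blow-ups are numbered $E_1,\dots,E_N$ so that, for $k\ge 2$, $E_k$ is centered at a point $c_k$ of the exceptional divisor of $E_1\circ\cdots\circ E_{k-1}$. $D_k$ denotes the exceptional curve created by $E_k$ (and its strict transforms), and $D=E^{-1}(0)=D_1\cup\dots\cup D_N$. Set $S_1=S$ and, for $k\ge2$, let $S_k$ be the germ at $c_k$ of the strict transform of $S$ by $E_1\circ\cdots\circ E_{k-1}$. $\nu(\cdot)$ denotes the algebraic multiplicity of (a reduced equation of) a germ of curve. $n_k$ is the number of irreducible components of the final strict transform $E^\star S$ that meet $D_k$. The set of parents $\mathfrak{P}(k)$, for $k\ge 2$, is the set of indices $j<k$ such that $c_k$ lies on (the strict transform of) $D_j$; $\mathfrak{P}(1)=\emptyset$. The set of neighbours $\mathfrak{N}(k)$ is the set of $i\neq k$ with $D_i\cap D_k\neq\emptyset$ in the final divisor $D$. The proximity matrix $P=(P_{ij})_{1\le i,j\le N}$ has $P_{ii}=1$, $P_{ij}=-1$ if $i\in\mathfrak{P}(j)$, and $P_{ij}=0$ otherwise; it is invertible. The system $(\mathcal{H})$. For $\Delta\in\{0,1\}^N$ put $\delta_k=\#\{i\in\mathfrak{P}(k):\Delta_i=1\}$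 and $\mathfrak{S}_k(\Delta)=\frac{\nu(S_k)-\delta_k}{2}+\Delta_k$ if $\nu(S_k)-\delta_k$ is even, $\mathfrak{S}_k(\Delta)=\frac{\nu(S_k)-\delta_k}{2}+\frac12$ if odd. The system $(\mathcal{H})$ is $P^{-1}\mathcal{E}=\mathfrak{S}(\Delta)$, with unique solution $\mathcal{E}(\Delta)=P\,\mathfrak{S}(\Delta)\in\mathbb{Z}^N$. A pair $\{\mathcal{E},\Delta\}$ solving $(\mathcal{H})$ is admissible if for every $k$: $\Delta_k=1\Rightarrow\epsilon_k\ge n_k$, and $\Delta_k=0\Rightarrow\epsilon_k\ge 2-\sum_{i\in\mathfrak{N}(k)}\Delta_i$. All these quantities are computed for the curve under consideration ($S$ or $S\cup l$). *)

theory Defs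
  imports Complex_Main
begin

text \<open>Combinatorial data of the desingularization E = E_1 o ... o E_N of a plane curve
  germ: components are indexed by 1..N; par k is the set of parents of k,
  nbr k the set of neighbours of k, nu k = nu(S_k) and n k = n_k.
  Delta is a 0/1 vector indexed by 1..N (encoded as nat valued function).\<close>

definition desing_data :: "nat \<Rightarrow> (nat \<Rightarrow> nat set) \<Rightarrow> (nat \<Rightarrow> nat set) \<Rightarrow> bool" where
  "desing_data N par nbr \<longleftrightarrow>
     N \<ge> 1 \<and> par 1 = {} \<and> (\<forall>k\<in>{2..N}. par k \<subseteq> {1..<k}) \<and>
     (\<forall>k\<in>{1..N}. nbr k \<subseteq> {1..N} - {k}) \<and>
     (\<forall>k\<in>{1..N}. \<forall>i\<in>{1..N}. i \<in> nbr k \<longleftrightarrow> k \<in> nbr i)"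

definition delta_cnt :: "(nat \<Rightarrow> nat set) \<Rightarrow> (nat \<Rightarrow> nat) \<Rightarrow> nat \<Rightarrow> nat" where
  "delta_cnt par Dl k = card {i \<in> par k. Dl i = 1}"

definition frakS :: "(nat \<Rightarrow> nat set) \<Rightarrow> (nat \<Rightarrow> nat) \<Rightarrow> (nat \<Rightarrow> nat) \<Rightarrow> nat \<Rightarrow> real" where
  "frakS par nu Dl k =
     (let x = int (nu k) - int (delta_cnt par Dl k) in
      if even x then real_of_int x / 2 + real (Dl k) else real_of_int x / 2 + 1 / 2)"

definition prox :: "(nat \<Rightarrow> nat set) \<Rightarrow> nat \<Rightarrow> nat \<Rightarrow> int" where
  "prox par i j = (if i = j then 1 else if i \<in> par j then -1 else 0)"

text \<open>the unique solution E(Delta) = P frak S(Delta) of (H)\<close>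
definition calE :: "nat \<Rightarrow> (nat \<Rightarrow> nat set) \<Rightarrow> (nat \<Rightarrow> nat) \<Rightarrow> (nat \<Rightarrow> nat) \<Rightarrow> nat \<Rightarrow> real" where
  "calE N par nu Dl k = (\<Sum>j=1..N. real_of_int (prox par k j) * frakS par nu Dl j)"

definition admissible :: "nat \<Rightarrow> (nat \<Rightarrow> nat set) \<Rightarrow> (nat \<Rightarrow> nat set) \<Rightarrow> (nat \<Rightarrow> nat) \<Rightarrow> (nat \<Rightarrow> nat) \<Rightarrow> (nat \<Rightarrow> nat) \<Rightarrow> bool" where
  "admissible N par nbr nu n Dl \<longleftrightarrow>
     (\<forall>k\<in>{1..N}.
        (Dl k = 1 \<longrightarrow> calE N par nu Dl k \<ge> real (n k)) \<and>
        (Dl k = 0 \<longrightarrow> calE N par nu Dl k \<ge> 2 - real (\<Sum>i\<in>nbr k. Dl i)))"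

end

theory Submission
  imports Defs
begin

text \<open>Adding l to S only raises nu(S_1) and n_1 by one, and since D_1 has no parents the
  first column of P is the unit vector. Hence E(Delta) changes
  only in its first entry, by the increase of frakS_1(Delta); this increase is 0 or 1 when
  Delta_1 = 0 (which makes the condition at 1 independent of n_1) and exactly 1 when
  Delta_1 = 1 and nu(S) is odd (which compensates the increase of n_1).\<close>

lemma frakS_cong:
  assumes "nu' k = nu k"
  shows "frakS par nu' Dl k = frakS par nu Dl k"
  using assms by (simp add: frakS_def)

lemma frakS_le_frakS_Suc:
  assumes "nu' k = Suc (nu k)" and "Dl k = 0"
  shows "frakS par nu Dl k \<le> frakS par nu' Dl k"
proof -
  define x where "x = int (nu k) - int (delta_cnt par Dl k)"
  have x': "int (nu' k) - int (delta_cnt par Dl k) = x + 1"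
    using assms(1) by (simp add: x_def)
  show ?thesis
    using assms(2) unfolding frakS_def Let_def x' x_def[symmetric]
    by (cases "even x") (simp_all add: field_simps)
qed

lemma frakS_Suc_of_odd:
  assumes "nu' k = Suc (nu k)" and "Dl k = 1"
    and "odd (int (nu k) - int (delta_cnt par Dl k))"
  shows "frakS par nu' Dl k = frakS par nu Dl k + 1"
proof -
  define x where "x = int (nu k) - int (delta_cnt par Dl k)"
  have x': "int (nu' k) - int (delta_cnt par Dl k) = x + 1"
    using assms(1) by (simp add: x_def)
  show ?thesis
    using assms(2,3) unfolding frakS_def Let_def x' x_def[symmetric]
    by (simp add: field_simps)
qed

lemma calE_update_root:
  assumes "N \<ge> 1" and "par 1 = {}"
    and "\<forall>j\<in>{2..N}. nu' j = nu j" and "k \<in> {1..N}"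
  shows "calE N par nu' Dl k =
           calE N par nu Dl k + (if k = 1 then frakS par nu' Dl 1 - frakS par nu Dl 1 else 0)"
proof -
  let ?t = "\<lambda>nu j. real_of_int (prox par k j) * frakS par nu Dl j"
  have "calE N par nu' Dl k - calE N par nu Dl k = (\<Sum>j\<in>{1..N}. ?t nu' j - ?t nu j)"
    by (simp add: calE_def sum_subtractf)
  also have "\<dots> = ?t nu' 1 - ?t nu 1"
  proof -
    have "frakS par nu' Dl j = frakS par nu Dl j" if "j \<in> {1..N} - {1}" for j
      using assms(3) that by (intro frakS_cong) auto
    then have "(\<Sum>j\<in>{1..N} - {1}. ?t nu' j - ?t nu j) = 0"
      by (intro sum.neutral) simp
    moreover have "1 \<in> {1..N}" using assms(1) by simp
    ultimately show ?thesis
      using sum.remove[of "{1..N}" 1 "\<lambda>j. ?t nu' j - ?t nu j"] by simp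
  qed
  also have "\<dots> = (if k = 1 then frakS par nu' Dl 1 - frakS par nu Dl 1 else 0)"
    using assms(2) by (simp add: prox_def algebra_simps)
  finally show ?thesis by simp
qed

lemma admissible_mono:
  assumes "admissible N par nbr nu n Dl"
    and "\<forall>k\<in>{1..N}. calE N par nu Dl k \<le> calE N par nu' Dl k"
    and "\<forall>k\<in>{1..N}. Dl k = 1 \<longrightarrow>
           real (n' k) - real (n k) \<le> calE N par nu' Dl k - calE N par nu Dl k"
  shows "admissible N par nbr nu' n' Dl"
  using assms unfolding admissible_def by (smt (verit))

theorem lemma2:
  fixes N :: nat and par nbr :: "nat \<Rightarrow> nat set"
    and nuS nS nuSl nSl Dl :: "nat \<Rightarrow> nat"
  assumes data: "desing_data N par nbr"
    and nu1: "nuSl 1 = nuS 1 + 1" and n1: "nSl 1 = nS 1 + 1"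
    and rest: "\<forall>k\<in>{2..N}. nuSl k = nuS k \<and> nSl k = nS k"
    and Dl01: "\<forall>k\<in>{1..N}. Dl k \<in> {0, 1}"
  shows "(Dl 1 = 0 \<and> admissible N par nbr nuS nS Dl \<longrightarrow> admissible N par nbr nuSl nSl Dl) \<and>
         (odd (nuS 1) \<and> Dl 1 = 1 \<and> admissible N par nbr nuS nS Dl \<longrightarrow> admissible N par nbr nuSl nSl Dl)"
proof -
  have "N \<ge> 1" and root: "par 1 = {}" using data by (auto simp: desing_data_def)
  define d where "d = frakS par nuSl Dl 1 - frakS par nuS Dl 1"
  have E: "calE N par nuSl Dl k - calE N par nuS Dl k = (if k = 1 then d else 0)"
    if "k \<in> {1..N}" for k
    using calE_update_root[of N par nuSl nuS k Dl] \<open>N \<ge> 1\<close> root rest that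
    unfolding d_def by simp
  have n_rest: "real (nSl k) - real (nS k) = 0" if "k \<in> {1..N}" "k \<noteq> 1" for k
    using rest that by simp
  have adm: "admissible N par nbr nuSl nSl Dl"
    if "admissible N par nbr nuS nS Dl" "d \<ge> 0" "Dl 1 = 1 \<Longrightarrow> 1 \<le> d"
  proof (rule admissible_mono[OF that(1)])
    show "\<forall>k\<in>{1..N}. calE N par nuS Dl k \<le> calE N par nuSl Dl k"
      using E \<open>d \<ge> 0\<close> by (smt (verit))
    show "\<forall>k\<in>{1..N}. Dl k = 1 \<longrightarrow>
           real (nSl k) - real (nS k) \<le> calE N par nuSl Dl k - calE N par nuS Dl k"
      using E n_rest n1 that(2,3) by fastforce
  qed
  have "delta_cnt par Dl 1 = 0" using root by (simp add: delta_cnt_def)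
  show ?thesis
  proof (intro conjI impI)
    assume a: "Dl 1 = 0 \<and> admissible N par nbr nuS nS Dl"
    then have "d \<ge> 0"
      using frakS_le_frakS_Suc[of nuSl 1 nuS Dl par] nu1 unfolding d_def by simp
    then show "admissible N par nbr nuSl nSl Dl" using a adm by simp
  next
    assume a: "odd (nuS 1) \<and> Dl 1 = 1 \<and> admissible N par nbr nuS nS Dl"
    then have "d = 1"
      using frakS_Suc_of_odd[of nuSl 1 nuS Dl par] nu1 \<open>delta_cnt par Dl 1 = 0\<close>
      unfolding d_def by simp
    then show "admissible N par nbr nuSl nSl Dl" using a adm by simp
  qed
qed

end
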